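(* For every graph $G$ and every distension $\widehat{G}$ of $G$, we have $\operatorname{tw}(\widehat{G})\leq\max\{\operatorname{tw}(G),3\}$ and $\operatorname{pw}(\widehat{G})\leq\operatorname{pw}(G)+2$.
   Context: All graphs are finite, simple and undirected. $\operatorname{tw}$ and $\operatorname{pw}$ denote treewidth and pathwidth. A distension of a graph $G$ is any graph $\widehat{G}$ obtained from $G$ by adding, for each edge $vw\in E(G)$, a new path $P_{vw}$ (with at least one vertex) each of whose vertices is adjacent to both $v$ and $w$, where the paths $P_{vw}$ are vertex-disjoint from $G$ and pairwise vertex-disjoint for distinct edges, and no other edges are added. *)

theory Defs
  imports Main
begin

definition graph :: "'a set \<Rightarrow> 'a set set \<Rightarrow> bool" where
  "graph V E \<longleftrightarrow> finite V \<and> (\<forall>e\<in>E. \<exists>u v. e = {u, v} \<and> u \<noteq> v \<and> u \<in> V \<and> v \<in> V)"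

definition connected_in :: "'a set set \<Rightarrow> 'a set \<Rightarrow> bool" where
  "connected_in E S \<longleftrightarrow>
     (\<forall>u\<in>S. \<forall>v\<in>S. (u, v) \<in> {(x, y). {x, y} \<in> E \<and> x \<in> S \<and> y \<in> S}\<^sup>*)"

definition is_cycle :: "'a set set \<Rightarrow> 'a list \<Rightarrow> bool" where
  "is_cycle E xs \<longleftrightarrow> length xs \<ge> 3 \<and> distinct xs \<and>
     (\<forall>i < length xs. {xs ! i, xs ! ((i + 1) mod length xs)} \<in> E)"

definition tree :: "'a set \<Rightarrow> 'a set set \<Rightarrow> bool" where
  "tree V E \<longleftrightarrow> graph V E \<and> V \<noteq> {} \<and> connected_in E V \<and> \<not> (\<exists>xs. is_cycle E xs)"

definition tree_decomposition ::
  "'a set \<Rightarrow> 'a set set \<Rightarrow> nat set \<Rightarrow> nat set set \<Rightarrow> (nat \<Rightarrow> 'a set) \<Rightarrow> bool" where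
  "tree_decomposition V E I F \<beta> \<longleftrightarrow>
     tree I F \<and> (\<forall>i\<in>I. \<beta> i \<subseteq> V) \<and>
     (\<forall>v\<in>V. \<exists>i\<in>I. v \<in> \<beta> i) \<and>
     (\<forall>e\<in>E. \<exists>i\<in>I. e \<subseteq> \<beta> i) \<and>
     (\<forall>v\<in>V. connected_in F {i \<in> I. v \<in> \<beta> i})"

definition td_width :: "nat set \<Rightarrow> (nat \<Rightarrow> 'a set) \<Rightarrow> int" where
  "td_width I \<beta> = Max ((\<lambda>i. int (card (\<beta> i)) - 1) ` I)"

definition treewidth :: "'a set \<Rightarrow> 'a set set \<Rightarrow> int" where
  "treewidth V E = (LEAST k. \<exists>I F \<beta>. tree_decomposition V E I F \<beta> \<and> td_width I \<beta> = k)"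

definition path_decomposition :: "'a set \<Rightarrow> 'a set set \<Rightarrow> 'a set list \<Rightarrow> bool" where
  "path_decomposition V E Bs \<longleftrightarrow>
     Bs \<noteq> [] \<and> (\<forall>B\<in>set Bs. B \<subseteq> V) \<and>
     (\<forall>v\<in>V. \<exists>B\<in>set Bs. v \<in> B) \<and>
     (\<forall>e\<in>E. \<exists>B\<in>set Bs. e \<subseteq> B) \<and>
     (\<forall>i j k. i \<le> j \<and> j \<le> k \<and> k < length Bs \<longrightarrow> Bs ! i \<inter> Bs ! k \<subseteq> Bs ! j)"

definition pd_width :: "'a set list \<Rightarrow> int" where
  "pd_width Bs = Max ((\<lambda>B. int (card B) - 1) ` set Bs)"

definition pathwidth :: "'a set \<Rightarrow> 'a set set \<Rightarrow> int" where
  "pathwidth V E = (LEAST k. \<exists>Bs. path_decomposition V E Bs \<and> pd_width Bs = k)"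

text \<open>(V', E') is a distension of (V, E): for each edge e a new path P e (nonempty list of
  distinct new vertices), pairwise disjoint, each vertex adjacent to both ends of e.\<close>
definition distension :: "'a set \<Rightarrow> 'a set set \<Rightarrow> 'a set \<Rightarrow> 'a set set \<Rightarrow> bool" where
  "distension V E V' E' \<longleftrightarrow> (\<exists>P :: 'a set \<Rightarrow> 'a list.
     (\<forall>e\<in>E. P e \<noteq> [] \<and> distinct (P e) \<and> set (P e) \<inter> V = {}) \<and>
     (\<forall>e\<in>E. \<forall>e'\<in>E. e \<noteq> e' \<longrightarrow> set (P e) \<inter> set (P e') = {}) \<and>
     V' = V \<union> (\<Union>e\<in>E. set (P e)) \<and>
     E' = E \<union> (\<Union>e\<in>E. {{P e ! i, P e ! Suc i} | i. Suc i < length (P e)}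
                    \<union> {{x, v} | x v. x \<in> set (P e) \<and> v \<in> e}))"

end

theory Submission
  imports Defs
begin

text \<open>
  The paths of a distension are added one edge \<open>e\<close> of \<open>G\<close> at a time, so it suffices to extend
  a decomposition by a single path \<open>x\<^sub>1 \<dots> x\<^sub>k\<close> whose vertices are all adjacent to both ends
  of \<open>e\<close>. Walking along the path from its far end, every \<open>x\<^sub>i\<close> gets a new bag
  \<open>e \<union> {x\<^sub>i, x\<^sub>i\<^sub>+\<^sub>1}\<close>. In a tree decomposition this bag is hung as a leaf below the previous
  one (the first one below a bag containing \<open>e\<close>); these bags have at most four vertices, whence
  the bound \<open>max (tw G) 3\<close>. In a path decomposition the bags \<open>A \<union> {x\<^sub>i, x\<^sub>i\<^sub>+\<^sub>1}\<close> are inserted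
  consecutively right after an original bag \<open>A \<supseteq> e\<close>; they are at most two vertices larger than
  \<open>A\<close>, and since the original bags survive, such an \<open>A\<close> of width \<open>\<le> pw G\<close> is available for
  every later edge as well.
\<close>

definition distension_edges :: "'a set \<Rightarrow> 'a list \<Rightarrow> 'a set set" where
  "distension_edges e p =
    {{p ! i, p ! Suc i} | i. Suc i < length p} \<union> {{x, v} | x v. x \<in> set p \<and> v \<in> e}"

lemma distension_edges_Nil [simp]: "distension_edges e [] = {}"
  unfolding distension_edges_def by simp

lemma distension_edges_Cons:
  "distension_edges e (x # p) = distension_edges e p \<union> (\<lambda>y. {x, y}) ` (e \<union> set (take 1 p))"
proof -
  have steps: "{{p ! i, p ! Suc i} | i. Suc i < length p} = (\<lambda>i. {p ! i, p ! Suc i}) ` {..<length p - 1}"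
    for p :: "'a list" by auto
  have "(\<lambda>i. {(x # p) ! i, (x # p) ! Suc i}) ` {..<length p}
      = (\<lambda>i. {p ! i, p ! Suc i}) ` {..<length p - 1} \<union> (\<lambda>y. {x, y}) ` set (take 1 p)"
    by (cases p) (auto simp: lessThan_Suc_eq_insert_0 image_image)
  then show ?thesis unfolding distension_edges_def steps by auto
qed

lemma nth_insert_after:
  assumes "s < length xs" "j \<le> length xs"
  shows "(take (Suc s) xs @ y # drop (Suc s) xs) ! j =
    (if j \<le> s then xs ! j else if j = Suc s then y else xs ! (j - 1))"
  using assms by (auto simp: nth_append min_def nth_Cons' not_le numeral_2_eq_2 Suc_diff_Suc)

lemma set_insert_after: "set (take n xs @ y # drop n xs) = insert y (set xs)"
  by (metis append_take_drop_id insert_commute list.simps(15) set_append Un_insert_right)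

lemma card_Un_path_start:
  "card (A \<union> set (x # take 1 p)) \<le> card A + 2"
proof -
  have "card (set (x # take 1 p)) \<le> 2"
    using card_length[of "x # take 1 p"] by simp
  then show ?thesis
    using card_Un_le[of A "set (x # take 1 p)"] by linarith
qed

lemma distension_induct:
  assumes G: "graph V E" and "distension V E V' E'" and base: "R V E"
    and step: "\<And>W F e p. R W F \<Longrightarrow> V \<subseteq> W \<Longrightarrow> E \<subseteq> F \<Longrightarrow> e \<in> E \<Longrightarrow>
      distinct p \<Longrightarrow> set p \<inter> W = {} \<Longrightarrow> R (W \<union> set p) (F \<union> distension_edges e p)"
  shows "R V' E'"
proof -
  obtain P :: "'a set \<Rightarrow> 'a list" where
    P: "\<forall>e\<in>E. P e \<noteq> [] \<and> distinct (P e) \<and> set (P e) \<inter> V = {}"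
    and disjoint: "\<forall>e\<in>E. \<forall>e'\<in>E. e \<noteq> e' \<longrightarrow> set (P e) \<inter> set (P e') = {}"
    and V': "V' = V \<union> (\<Union>e\<in>E. set (P e))" and E': "E' = E \<union> (\<Union>e\<in>E. distension_edges e (P e))"
    using assms(2) unfolding distension_def distension_edges_def by blast
  have "finite E"
  proof (rule finite_subset)
    show "E \<subseteq> Pow V" using G unfolding graph_def by fastforce
  qed (use G in \<open>simp add: graph_def\<close>)
  have "R (V \<union> (\<Union>e\<in>S. set (P e))) (E \<union> (\<Union>e\<in>S. distension_edges e (P e)))" if "S \<subseteq> E" for S
    using finite_subset[OF that \<open>finite E\<close>] that
  proof (induction S rule: finite_induct)
    case empty
    then show ?case using base by simp
  next
    case (insert e S)
    then have "e \<in> E" "S \<subseteq> E" by auto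
    have "set (P e) \<inter> set (P e') = {}" if "e' \<in> S" for e'
    proof -
      have "e' \<in> E" "e' \<noteq> e" using that \<open>S \<subseteq> E\<close> insert.hyps(2) by auto
      then show ?thesis using disjoint \<open>e \<in> E\<close> by blast
    qed
    moreover have "set (P e) \<inter> V = {}" using P \<open>e \<in> E\<close> by simp
    ultimately have "set (P e) \<inter> (V \<union> (\<Union>e\<in>S. set (P e))) = {}" by auto
    with insert.IH[OF \<open>S \<subseteq> E\<close>] have
      "R (V \<union> (\<Union>e\<in>S. set (P e)) \<union> set (P e)) (E \<union> (\<Union>e\<in>S. distension_edges e (P e)) \<union> distension_edges e (P e))"
      using P \<open>e \<in> E\<close> by (intro step) auto
    then show ?case by (simp add: Un_ac)
  qed
  then show ?thesis unfolding V' E' by blast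
qed

lemma connected_in_mono:
  assumes "connected_in E S" "E \<subseteq> E'" shows "connected_in E' S"
proof -
  have "{(x, y). {x, y} \<in> E \<and> x \<in> S \<and> y \<in> S} \<subseteq> {(x, y). {x, y} \<in> E' \<and> x \<in> S \<and> y \<in> S}"
    using assms(2) by auto
  from rtrancl_mono[OF this] assms(1) show ?thesis unfolding connected_in_def by blast
qed

lemma connected_in_singleton: "connected_in E {x}"
  unfolding connected_in_def by auto

lemma connected_in_insert:
  assumes "connected_in E S" "y \<in> S" "{x, y} \<in> E"
  shows "connected_in E (insert x S)"
proof -
  let ?R = "\<lambda>S. {(a, b). {a, b} \<in> E \<and> a \<in> S \<and> b \<in> S}"
  have "?R S \<subseteq> ?R (insert x S)" by auto
  then have S: "(u, v) \<in> (?R (insert x S))\<^sup>*" if "u \<in> S" "v \<in> S" for u v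
    using assms(1) that rtrancl_mono unfolding connected_in_def by blast
  have "(x, y) \<in> ?R (insert x S)" "(y, x) \<in> ?R (insert x S)"
    using assms(2,3) by (auto simp: insert_commute)
  then have "(x, v) \<in> (?R (insert x S))\<^sup>*" "(v, x) \<in> (?R (insert x S))\<^sup>*" if "v \<in> S" for v
    using S[OF _ that] S[OF that] assms(2)
    by (meson converse_rtrancl_into_rtrancl rtrancl_into_rtrancl)+
  with S show ?thesis unfolding connected_in_def by blast
qed

lemma cycle_avoids_leaf:
  assumes cycle: "is_cycle E xs" and leaf: "\<And>y z. {j, y} \<in> E \<Longrightarrow> {j, z} \<in> E \<Longrightarrow> y = z"
  shows "j \<notin> set xs"
proof
  assume "j \<in> set xs"
  let ?n = "length xs"
  obtain k where k: "k < ?n" "xs ! k = j" using \<open>j \<in> set xs\<close> by (auto simp: in_set_conv_nth)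
  have n: "?n \<ge> 3" and "distinct xs"
    and edge: "\<And>i. i < ?n \<Longrightarrow> {xs ! i, xs ! ((i + 1) mod ?n)} \<in> E"
    using cycle unfolding is_cycle_def by auto
  define succ where "succ = (k + 1) mod ?n"
  define pred where "pred = (if k = 0 then ?n - 1 else k - 1)"
  have "succ < ?n" "pred < ?n" "(pred + 1) mod ?n = k" "succ \<noteq> pred"
    unfolding succ_def pred_def using n k by (auto simp: mod_Suc)
  moreover have "{j, xs ! succ} \<in> E" "{j, xs ! pred} \<in> E"
    using edge[OF k(1)] edge[of pred] k \<open>pred < ?n\<close> \<open>(pred + 1) mod ?n = k\<close>
    by (auto simp: succ_def insert_commute)
  ultimately show False using leaf \<open>distinct xs\<close> by (metis nth_eq_iff_index_eq)
qed

lemma tree_add_leaf: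
  assumes T: "tree I T" and i: "i \<in> I" and j: "j \<notin> I"
  shows "tree (insert j I) (insert {i, j} T)"
proof -
  have g: "graph I T" and "I \<noteq> {}" and c: "connected_in T I" and acyclic: "\<nexists>xs. is_cycle T xs"
    using T unfolding tree_def by blast+
  have "i \<noteq> j" using i j by auto
  have j_not_in_T: "j \<notin> f" if "f \<in> T" for f
    using g j that unfolding graph_def by fastforce
  have g': "graph (insert j I) (insert {i, j} T)"
    using g i \<open>i \<noteq> j\<close> unfolding graph_def by (simp add: Bex_def) (metis insertCI)
  have c': "connected_in (insert {i, j} T) (insert j I)"
    by (rule connected_in_insert[OF connected_in_mono[OF c] i]) (auto simp: insert_commute)
  have "is_cycle T xs" if cycle: "is_cycle (insert {i, j} T) xs" for xs
  proof -
    have "j \<notin> set xs"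
      by (rule cycle_avoids_leaf[OF cycle]) (use j_not_in_T \<open>i \<noteq> j\<close> in \<open>auto simp: doubleton_eq_iff\<close>)
    then have "xs ! k \<noteq> j \<and> xs ! ((k + 1) mod length xs) \<noteq> j" if "k < length xs" for k
      using that by (auto intro!: nth_mem mod_less_divisor)
    then show ?thesis using cycle unfolding is_cycle_def by (auto simp: doubleton_eq_iff)
  qed
  then show ?thesis unfolding tree_def using g' c' acyclic \<open>I \<noteq> {}\<close> by auto
qed

lemma tree_decomposition_finite_nonempty:
  "tree_decomposition V E I T \<beta> \<Longrightarrow> finite I \<and> I \<noteq> {}"
  unfolding tree_decomposition_def tree_def graph_def by auto

lemma int_Least_bdd_below:
  fixes P :: "int \<Rightarrow> bool"
  assumes "P k" and bdd: "\<And>k. P k \<Longrightarrow> b \<le> k"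
  shows "P (LEAST k. P k)" and "(LEAST k. P k) \<le> k"
proof -
  define n where "n = (LEAST n. P (b + int n))"
  have shift: "P (b + int (nat (k - b)))" if "P k" for k
    using that bdd[OF that] by simp
  have Pn: "P (b + int n)"
    unfolding n_def using shift[OF \<open>P k\<close>] by (rule LeastI)
  have least: "n \<le> nat (k - b)" if "P k" for k
    unfolding n_def using shift[OF that] by (rule Least_le)
  have "(LEAST k. P k) = b + int n"
  proof (rule Least_equality)
    show "b + int n \<le> k" if "P k" for k
      using least[OF that] bdd[OF that] by linarith
  qed (rule Pn)
  then show "P (LEAST k. P k)" and "(LEAST k. P k) \<le> k"
    using Pn least[OF \<open>P k\<close>] bdd[OF \<open>P k\<close>] by auto
qed

lemma td_width_le_iff:
  assumes "tree_decomposition V E I T \<beta>"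
  shows "td_width I \<beta> \<le> K \<longleftrightarrow> (\<forall>i\<in>I. int (card (\<beta> i)) - 1 \<le> K)"
  using tree_decomposition_finite_nonempty[OF assms] unfolding td_width_def by simp

lemma td_width_ge:
  assumes "tree_decomposition V E I T \<beta>"
  shows "-1 \<le> td_width I \<beta>"
  using tree_decomposition_finite_nonempty[OF assms] unfolding td_width_def by (auto simp: Max_ge_iff)

lemma treewidth_le:
  assumes "tree_decomposition V E I T \<beta>" and "\<forall>i\<in>I. int (card (\<beta> i)) - 1 \<le> K"
  shows "treewidth V E \<le> K"
proof -
  let ?P = "\<lambda>k. \<exists>I T \<beta>. tree_decomposition V E I T \<beta> \<and> td_width I \<beta> = k"
  have "treewidth V E \<le> td_width I \<beta>"
    unfolding treewidth_def using int_Least_bdd_below(2)[of ?P] td_width_ge assms(1) by blast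
  also have "\<dots> \<le> K" using assms td_width_le_iff by blast
  finally show ?thesis .
qed

lemma treewidth_attained:
  assumes "graph V E"
  shows "\<exists>I T \<beta>. tree_decomposition V E I T \<beta> \<and> (\<forall>i\<in>I. int (card (\<beta> i)) - 1 \<le> treewidth V E)"
proof -
  let ?P = "\<lambda>k. \<exists>I T \<beta>. tree_decomposition V E I T \<beta> \<and> td_width I \<beta> = k"
  have "tree_decomposition V E {0} {} (\<lambda>_. V)"
    using assms unfolding tree_decomposition_def tree_def graph_def connected_in_def is_cycle_def
    by (auto intro!: exI[of _ 0])
  then have "?P (td_width {0} (\<lambda>_. V))" by blast
  then have "?P (treewidth V E)"
    unfolding treewidth_def using int_Least_bdd_below(1)[of ?P] td_width_ge by blast
  then obtain I T \<beta> where td: "tree_decomposition V E I T \<beta>" and "td_width I \<beta> = treewidth V E"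
    by blast
  then show ?thesis using td_width_le_iff[OF td, of "treewidth V E"] by auto
qed

lemma pd_width_le_iff:
  assumes "path_decomposition V E Bs"
  shows "pd_width Bs \<le> K \<longleftrightarrow> (\<forall>B\<in>set Bs. int (card B) - 1 \<le> K)"
  using assms unfolding pd_width_def path_decomposition_def by simp

lemma pd_width_ge:
  assumes "path_decomposition V E Bs"
  shows "-1 \<le> pd_width Bs"
proof -
  have "hd Bs \<in> set Bs" using assms unfolding path_decomposition_def by simp
  then have "int (card (hd Bs)) - 1 \<le> pd_width Bs" unfolding pd_width_def by (intro Max_ge) auto
  then show ?thesis by linarith
qed

lemma pathwidth_le:
  assumes "path_decomposition V E Bs" and "\<forall>B\<in>set Bs. int (card B) - 1 \<le> K"
  shows "pathwidth V E \<le> K"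
proof -
  let ?P = "\<lambda>k. \<exists>Bs. path_decomposition V E Bs \<and> pd_width Bs = k"
  have "pathwidth V E \<le> pd_width Bs"
    unfolding pathwidth_def using int_Least_bdd_below(2)[of ?P] pd_width_ge assms(1) by blast
  also have "\<dots> \<le> K" using assms pd_width_le_iff by blast
  finally show ?thesis .
qed

lemma pathwidth_attained:
  assumes "graph V E"
  shows "\<exists>Bs. path_decomposition V E Bs \<and> (\<forall>B\<in>set Bs. int (card B) - 1 \<le> pathwidth V E)"
proof -
  let ?P = "\<lambda>k. \<exists>Bs. path_decomposition V E Bs \<and> pd_width Bs = k"
  have "path_decomposition V E [V]"
    using assms unfolding path_decomposition_def graph_def by auto
  then have "?P (pd_width [V])" by blast
  then have "?P (pathwidth V E)"
    unfolding pathwidth_def using int_Least_bdd_below(1)[of ?P] pd_width_ge by blast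
  then obtain Bs where pd: "path_decomposition V E Bs" and "pd_width Bs = pathwidth V E"
    by blast
  then show ?thesis using pd_width_le_iff[OF pd, of "pathwidth V E"] by auto
qed

lemma tree_decomposition_add_leaf:
  assumes td: "tree_decomposition W F I T \<beta>" and i: "i \<in> I" and j: "j \<notin> I"
    and left: "B \<inter> W \<subseteq> \<beta> i" and F': "\<forall>f\<in>F'. f \<in> F \<or> f \<subseteq> B"
  shows "tree_decomposition (W \<union> B) F' (insert j I) (insert {i, j} T) (\<beta>(j := B))"
proof -
  have T: "tree I T" and bags: "\<forall>i\<in>I. \<beta> i \<subseteq> W" and cover: "\<forall>v\<in>W. \<exists>i\<in>I. v \<in> \<beta> i"
    and edges: "\<forall>f\<in>F. \<exists>i\<in>I. f \<subseteq> \<beta> i" and conn: "\<forall>v\<in>W. connected_in T {i \<in> I. v \<in> \<beta> i}"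
    using td unfolding tree_decomposition_def by auto
  let ?\<beta> = "\<beta>(j := B)"
  let ?T = "insert {i, j} T"
  have old: "?\<beta> k = \<beta> k" if "k \<in> I" for k
    using that j by auto
  have "connected_in ?T {k \<in> insert j I. v \<in> ?\<beta> k}" if v: "v \<in> W \<union> B" for v
  proof -
    consider "v \<in> W" "v \<in> B" | "v \<in> W" "v \<notin> B" | "v \<notin> W" by blast
    then show ?thesis
    proof cases
      case 1
      then have "{k \<in> insert j I. v \<in> ?\<beta> k} = insert j {k \<in> I. v \<in> \<beta> k}"
        using old by auto
      moreover have "i \<in> {k \<in> I. v \<in> \<beta> k}"
        using i left 1 by auto
      moreover have "connected_in ?T {k \<in> I. v \<in> \<beta> k}"
        using connected_in_mono[OF conn[rule_format, OF \<open>v \<in> W\<close>] subset_insertI] .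
      ultimately show ?thesis
        using connected_in_insert[of ?T _ i j] by (auto simp: insert_commute)
    next
      case 2
      then have "{k \<in> insert j I. v \<in> ?\<beta> k} = {k \<in> I. v \<in> \<beta> k}"
        using old j by auto
      then show ?thesis
        using connected_in_mono[OF conn[rule_format, OF \<open>v \<in> W\<close>] subset_insertI] by simp
    next
      case 3
      then have "{k \<in> insert j I. v \<in> ?\<beta> k} = {j}"
        using v old bags by auto
      then show ?thesis by (simp add: connected_in_singleton)
    qed
  qed
  moreover have "\<forall>k\<in>insert j I. ?\<beta> k \<subseteq> W \<union> B" "\<forall>v\<in>W \<union> B. \<exists>k\<in>insert j I. v \<in> ?\<beta> k"
    "\<forall>f\<in>F'. \<exists>k\<in>insert j I. f \<subseteq> ?\<beta> k"
    using bags cover edges F' old by fastforce+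
  ultimately show ?thesis
    unfolding tree_decomposition_def using tree_add_leaf[OF T i j] by blast
qed

lemma path_decomposition_insert_bag:
  assumes pd: "path_decomposition W F Cs" and s: "s < length Cs"
    and left: "B \<inter> W \<subseteq> Cs ! s" and right: "Suc s < length Cs \<Longrightarrow> Cs ! s \<inter> Cs ! Suc s \<subseteq> B"
    and F': "\<forall>f\<in>F'. f \<in> F \<or> f \<subseteq> B"
  shows "path_decomposition (W \<union> B) F' (take (Suc s) Cs @ B # drop (Suc s) Cs)"
proof -
  define D where "D = take (Suc s) Cs @ B # drop (Suc s) Cs"
  have bags: "\<forall>C\<in>set Cs. C \<subseteq> W" and cover: "\<forall>v\<in>W. \<exists>C\<in>set Cs. v \<in> C"
    and edges: "\<forall>f\<in>F. \<exists>C\<in>set Cs. f \<subseteq> C"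
    and interp: "\<And>i j k. i \<le> j \<Longrightarrow> j \<le> k \<Longrightarrow> k < length Cs \<Longrightarrow> Cs ! i \<inter> Cs ! k \<subseteq> Cs ! j"
    using pd unfolding path_decomposition_def by auto
  have set_D: "set D = insert B (set Cs)"
    unfolding D_def by (rule set_insert_after)
  have len_D: "length D = Suc (length Cs)"
    unfolding D_def using s by simp
  have nth_D: "D ! j = (if j \<le> s then Cs ! j else if j = Suc s then B else Cs ! (j - 1))"
    if "j < length D" for j
    using nth_insert_after[OF s, of j B] that len_D unfolding D_def by simp
  \<comment> \<open>position in Cs of the bag D ! x; the new bag is sent to its left neighbour\<close>
  define g where "g x = (if x \<le> s then x else x - 1)" for x
  have g_mono: "g x \<le> g y" if "x \<le> y" for x y
    using that unfolding g_def by auto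
  have g_less: "g x < length Cs" if "x < length D" for x
    using that s len_D unfolding g_def by auto
  have D_old: "D ! x = Cs ! g x" if "x < length D" "x \<noteq> Suc s" for x
    using nth_D[OF that(1)] that(2) unfolding g_def by auto
  have D_in_W: "D ! x \<inter> W \<subseteq> Cs ! g x" if "x < length D" for x
    using D_old[OF that] nth_D[OF that] left unfolding g_def by (cases "x = Suc s") auto
  have D_new: "x = Suc s" if "x < length D" "v \<in> D ! x" "v \<notin> W" for x v
    using D_old[OF that(1)] g_less[OF that(1)] bags that(2,3) by (metis nth_mem subsetD)
  have "D ! i \<inter> D ! k \<subseteq> D ! j" if ijk: "i \<le> j" "j \<le> k" "k < length D" for i j k
  proof
    fix v assume v: "v \<in> D ! i \<inter> D ! k"
    have "i < length D" "j < length D" using ijk by auto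
    consider "v \<notin> W" | "v \<in> W" "j = Suc s" | "v \<in> W" "j \<noteq> Suc s" by blast
    then show "v \<in> D ! j"
    proof cases
      case 1
      then show ?thesis using v ijk D_new[of i v] D_new[of k v] \<open>i < length D\<close> by auto
    next
      case 2
      show ?thesis
      proof (cases "i = Suc s \<or> k = Suc s")
        case False
        then have "g i \<le> s" "Suc s \<le> g k" using ijk 2 unfolding g_def by auto
        moreover have "v \<in> Cs ! g i" "v \<in> Cs ! g k"
          using v 2 D_in_W[of i] D_in_W[of k] \<open>i < length D\<close> ijk by auto
        ultimately have "v \<in> Cs ! s \<inter> Cs ! Suc s"
          using interp[of "g i" s "g k"] interp[of "g i" "Suc s" "g k"] g_less[of k] ijk by auto
        moreover have "Suc s < length Cs"
          using g_less[of k] ijk \<open>Suc s \<le> g k\<close> by linarith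
        moreover have "D ! j = B"
          using nth_D[of j] 2 \<open>j < length D\<close> by simp
        ultimately show ?thesis using right by blast
      qed (use v 2 in auto)
    next
      case 3
      then have "v \<in> Cs ! g i \<inter> Cs ! g k"
        using v D_in_W[of i] D_in_W[of k] \<open>i < length D\<close> ijk by auto
      then show ?thesis
        using interp[OF g_mono g_mono g_less] ijk D_old[of j] 3 \<open>j < length D\<close> by blast
    qed
  qed
  moreover have "D \<noteq> []" "\<forall>C\<in>set D. C \<subseteq> W \<union> B" "\<forall>v\<in>W \<union> B. \<exists>C\<in>set D. v \<in> C"
    "\<forall>f\<in>F'. \<exists>C\<in>set D. f \<subseteq> C"
    using len_D set_D bags cover edges F' by fastforce+
  ultimately show ?thesis
    unfolding path_decomposition_def D_def[symmetric] by blast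
qed

lemma tree_decomposition_attach_path:
  assumes td: "tree_decomposition W F I T \<beta>" and width: "\<forall>i\<in>I. int (card (\<beta> i)) - 1 \<le> K"
    and e: "e \<subseteq> W" "int (card e) + 1 \<le> K" "\<exists>i\<in>I. e \<subseteq> \<beta> i"
    and p: "distinct p" "set p \<inter> W = {}"
  shows "\<exists>I' T' \<beta>'. tree_decomposition (W \<union> set p) (F \<union> distension_edges e p) I' T' \<beta>'
    \<and> (\<forall>i\<in>I'. int (card (\<beta>' i)) - 1 \<le> K)"
proof -
  have "\<exists>I' T' \<beta>'. tree_decomposition (W \<union> set p) (F \<union> distension_edges e p) I' T' \<beta>'
    \<and> (\<forall>i\<in>I'. int (card (\<beta>' i)) - 1 \<le> K) \<and> (\<exists>i\<in>I'. e \<union> set (take 1 p) \<subseteq> \<beta>' i)"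
    using p
  proof (induction p)
    case Nil
    then show ?case using td width e by auto
  next
    case (Cons x p)
    then obtain I' T' \<beta>' i where td': "tree_decomposition (W \<union> set p) (F \<union> distension_edges e p) I' T' \<beta>'"
      and width': "\<forall>i\<in>I'. int (card (\<beta>' i)) - 1 \<le> K" and i: "i \<in> I'"
      and start: "e \<union> set (take 1 p) \<subseteq> \<beta>' i" by auto
    obtain j :: nat where j: "j \<notin> I'"
      using tree_decomposition_finite_nonempty[OF td'] ex_new_if_finite[OF infinite_UNIV_nat] by blast
    define B where "B = e \<union> set (x # take 1 p)"
    have x: "x \<notin> W \<union> set p" using Cons.prems by auto
    have "tree_decomposition (W \<union> set p \<union> B) (F \<union> distension_edges e (x # p))
        (insert j I') (insert {i, j} T') (\<beta>'(j := B))"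
    proof (rule tree_decomposition_add_leaf[OF td' i j])
      show "B \<inter> (W \<union> set p) \<subseteq> \<beta>' i" using start x unfolding B_def by auto
      show "\<forall>f\<in>F \<union> distension_edges e (x # p). f \<in> F \<union> distension_edges e p \<or> f \<subseteq> B"
        unfolding distension_edges_Cons B_def by auto
    qed
    moreover have "W \<union> set p \<union> B = W \<union> set (x # p)"
      using e(1) set_take_subset[of 1 p] unfolding B_def by auto
    ultimately have "tree_decomposition (W \<union> set (x # p)) (F \<union> distension_edges e (x # p))
        (insert j I') (insert {i, j} T') (\<beta>'(j := B))"
      by simp
    moreover have "int (card B) - 1 \<le> K"
      using card_Un_path_start[of e x p] e(2) unfolding B_def by linarith
    then have "\<forall>k\<in>insert j I'. int (card ((\<beta>'(j := B)) k)) - 1 \<le> K"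
      using width' j by auto
    moreover have "e \<union> set (take 1 (x # p)) \<subseteq> (\<beta>'(j := B)) j"
      unfolding B_def by auto
    ultimately show ?case by blast
  qed
  then show ?thesis by blast
qed

lemma path_decomposition_attach_path:
  assumes pd: "path_decomposition W F Bs" and width: "\<forall>B\<in>set Bs. int (card B) - 1 \<le> K + 2"
    and A: "A \<in> set Bs" "e \<subseteq> A" "int (card A) - 1 \<le> K"
    and p: "distinct p" "set p \<inter> W = {}"
  shows "\<exists>Bs'. path_decomposition (W \<union> set p) (F \<union> distension_edges e p) Bs'
    \<and> (\<forall>B\<in>set Bs'. int (card B) - 1 \<le> K + 2) \<and> set Bs \<subseteq> set Bs'"
proof -
  have "A \<subseteq> W" using pd A unfolding path_decomposition_def by auto
  \<comment> \<open>the last clause is what allows the next bag to be inserted right after \<open>Cs ! s\<close>\<close>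
  have "\<exists>Cs s. path_decomposition (W \<union> set p) (F \<union> distension_edges e p) Cs
      \<and> (\<forall>B\<in>set Cs. int (card B) - 1 \<le> K + 2) \<and> set Bs \<subseteq> set Cs \<and> s < length Cs
      \<and> A \<union> set (take 1 p) \<subseteq> Cs ! s \<and> (Suc s < length Cs \<longrightarrow> Cs ! s \<inter> Cs ! Suc s \<subseteq> A)"
    using p
  proof (induction p)
    case Nil
    obtain s where "s < length Bs" "Bs ! s = A" using A(1) by (auto simp: in_set_conv_nth)
    then show ?case using pd width by (intro exI[of _ Bs] exI[of _ s]) auto
  next
    case (Cons x p)
    then obtain Cs s where pd': "path_decomposition (W \<union> set p) (F \<union> distension_edges e p) Cs"
      and width': "\<forall>B\<in>set Cs. int (card B) - 1 \<le> K + 2" and Bs: "set Bs \<subseteq> set Cs"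
      and s: "s < length Cs" and start: "A \<union> set (take 1 p) \<subseteq> Cs ! s"
      and sep: "Suc s < length Cs \<longrightarrow> Cs ! s \<inter> Cs ! Suc s \<subseteq> A" by auto
    define B where "B = A \<union> set (x # take 1 p)"
    define D where "D = take (Suc s) Cs @ B # drop (Suc s) Cs"
    have x: "x \<notin> W \<union> set p" using Cons.prems by auto
    have "path_decomposition (W \<union> set p \<union> B) (F \<union> distension_edges e (x # p)) D"
      unfolding D_def
    proof (rule path_decomposition_insert_bag[OF pd' s])
      show "B \<inter> (W \<union> set p) \<subseteq> Cs ! s" using start x unfolding B_def by auto
      show "Cs ! s \<inter> Cs ! Suc s \<subseteq> B" if "Suc s < length Cs" using sep that unfolding B_def by auto
      show "\<forall>f\<in>F \<union> distension_edges e (x # p). f \<in> F \<union> distension_edges e p \<or> f \<subseteq> B"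
        using A(2) unfolding distension_edges_Cons B_def by auto
    qed
    moreover have "W \<union> set p \<union> B = W \<union> set (x # p)"
      using \<open>A \<subseteq> W\<close> set_take_subset[of 1 p] unfolding B_def by auto
    ultimately have pd_D: "path_decomposition (W \<union> set (x # p)) (F \<union> distension_edges e (x # p)) D"
      by simp
    have "int (card B) - 1 \<le> K + 2"
      using card_Un_path_start[of A x p] A(3) unfolding B_def by linarith
    moreover have set_D: "set D = insert B (set Cs)"
      unfolding D_def by (rule set_insert_after)
    ultimately have width_D: "\<forall>B\<in>set D. int (card B) - 1 \<le> K + 2"
      using width' by simp
    have len_D: "length D = Suc (length Cs)"
      unfolding D_def using s by simp
    have D_new: "D ! Suc s = B"
      unfolding D_def using nth_insert_after[OF s, of "Suc s" B] s by simp
    have "D ! Suc s \<inter> D ! Suc (Suc s) \<subseteq> A" if "Suc (Suc s) < length D"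
    proof -
      have "D ! Suc (Suc s) = Cs ! Suc s"
        using nth_insert_after[OF s, of "Suc (Suc s)" B] that len_D unfolding D_def by simp
      moreover have "Cs ! Suc s \<subseteq> W \<union> set p"
        using pd' that len_D unfolding path_decomposition_def by auto
      moreover have "set (take 1 p) \<inter> Cs ! Suc s \<subseteq> A"
        using start sep that len_D by auto
      ultimately show ?thesis using x D_new unfolding B_def by auto
    qed
    moreover have "A \<union> set (take 1 (x # p)) \<subseteq> D ! Suc s"
      using D_new unfolding B_def by auto
    moreover have "set Bs \<subseteq> set D" "Suc s < length D"
      using Bs set_D len_D s by auto
    ultimately show ?case
      using pd_D width_D by blast
  qed
  then show ?thesis by blast
qed

theorem lemma4p6:
  fixes V V' :: "'a set" and E E' :: "'a set set"
  assumes "graph V E" and "distension V E V' E'"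
  shows "treewidth V' E' \<le> max (treewidth V E) 3 \<and> pathwidth V' E' \<le> pathwidth V E + 2"
proof
  have edge: "e \<subseteq> V" "card e \<le> 2" if "e \<in> E" for e
    using assms(1) that unfolding graph_def by (auto simp: card_insert_if)
  let ?K = "max (treewidth V E) 3"
  let ?R = "\<lambda>W F. \<exists>I T \<beta>. tree_decomposition W F I T \<beta> \<and> (\<forall>i\<in>I. int (card (\<beta> i)) - 1 \<le> ?K)"
  have "?R V' E'"
  proof (rule distension_induct[OF assms, where R = ?R])
    show "?R V E" using treewidth_attained[OF assms(1)] by fastforce
  next
    fix W F e p
    assume "?R W F" and "V \<subseteq> W" "E \<subseteq> F" "e \<in> E" and p: "distinct p" "set p \<inter> W = {}"
    then obtain I T \<beta> where td: "tree_decomposition W F I T \<beta>"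
      and width: "\<forall>i\<in>I. int (card (\<beta> i)) - 1 \<le> ?K" by blast
    have "e \<subseteq> W" using edge(1) \<open>e \<in> E\<close> \<open>V \<subseteq> W\<close> by blast
    moreover have "int (card e) + 1 \<le> ?K"
      using edge(2)[OF \<open>e \<in> E\<close>] max.cobounded2[of "treewidth V E" 3] by linarith
    moreover have "\<exists>i\<in>I. e \<subseteq> \<beta> i"
      using td \<open>E \<subseteq> F\<close> \<open>e \<in> E\<close> unfolding tree_decomposition_def by blast
    ultimately show "?R (W \<union> set p) (F \<union> distension_edges e p)"
      using tree_decomposition_attach_path[OF td width _ _ _ p] by blast
  qed
  then show "treewidth V' E' \<le> ?K" using treewidth_le by blast
next
  let ?K = "pathwidth V E"
  let ?R = "\<lambda>W F. \<exists>Bs. path_decomposition W F Bs \<and> (\<forall>B\<in>set Bs. int (card B) - 1 \<le> ?K + 2)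
    \<and> (\<forall>e\<in>E. \<exists>A\<in>set Bs. e \<subseteq> A \<and> int (card A) - 1 \<le> ?K)"
  have "?R V' E'"
  proof (rule distension_induct[OF assms, where R = ?R])
    obtain Bs where pd: "path_decomposition V E Bs" and width: "\<forall>B\<in>set Bs. int (card B) - 1 \<le> ?K"
      using pathwidth_attained[OF assms(1)] by blast
    have "\<forall>e\<in>E. \<exists>A\<in>set Bs. e \<subseteq> A"
      using pd by (simp add: path_decomposition_def)
    then have "\<forall>e\<in>E. \<exists>A\<in>set Bs. e \<subseteq> A \<and> int (card A) - 1 \<le> ?K"
      using width by blast
    moreover have "\<forall>B\<in>set Bs. int (card B) - 1 \<le> ?K + 2"
      using width by force
    ultimately show "?R V E" using pd by blast
  next
    fix W F e p
    assume "?R W F" and "e \<in> E" and p: "distinct p" "set p \<inter> W = {}"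
    then obtain Bs where pd: "path_decomposition W F Bs"
      and width: "\<forall>B\<in>set Bs. int (card B) - 1 \<le> ?K + 2"
      and small: "\<forall>e\<in>E. \<exists>A\<in>set Bs. e \<subseteq> A \<and> int (card A) - 1 \<le> ?K" by blast
    then obtain A where "A \<in> set Bs" "e \<subseteq> A" "int (card A) - 1 \<le> ?K"
      using \<open>e \<in> E\<close> by blast
    then obtain Bs' where "path_decomposition (W \<union> set p) (F \<union> distension_edges e p) Bs'"
      and "\<forall>B\<in>set Bs'. int (card B) - 1 \<le> ?K + 2" and "set Bs \<subseteq> set Bs'"
      using path_decomposition_attach_path[OF pd width _ _ _ p] by blast
    moreover have "\<forall>e\<in>E. \<exists>A\<in>set Bs'. e \<subseteq> A \<and> int (card A) - 1 \<le> ?K"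
      using small \<open>set Bs \<subseteq> set Bs'\<close> by blast
    ultimately show "?R (W \<union> set p) (F \<union> distension_edges e p)" by blast
  qed
  then show "pathwidth V' E' \<le> ?K + 2" using pathwidth_le by blast
qed

end
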